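(* Let $A$ be an arbitrary group. Then $A$ can be embedded into a group $G$ such that $PJ(G)=J_0(G)=X(G)$. Hence Jensen's functional equation $f(xy)+f(xy^{-1})=2f(x)$ is stable on $G$, i.e. for every function $f\colon G\to\mathbb{R}$ for which there is $c>0$ with $|f(xy)+f(xy^{-1})-2f(x)|\le c$ for all $x,y\in G$, there is $j\colon G\to\mathbb{R}$ with $j(xy)+j(xy^{-1})=2j(x)$ for all $x,y$ and $j-f$ bounded.
   Context: For a group $G$: a function $f\colon G\to\mathbb{R}$ is quasi-Jensen if there is $c>0$ with $|f(xy)+f(xy^{-1})-2f(x)|\le c$ for all $x,y\in G$; it is pseudo-Jensen if it is quasi-Jensen and $f(x^n)=nf(x)$ for all $x\in G$, $n\in\mathbb{Z}$. $PJ(G)$ is the space of real-valued pseudo-Jensen functions on $G$. $J_0(G)$ is the space of functions $f\colon G\to\mathbb{R}$ with $f(xy)+f(xy^{-1})=2f(x)$ for all $x,y\in G$ and $f(1)=0$. $X(G)$ is the space of homomorphisms $G\to(\mathbb{R},+)$. *)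

theory Defs
  imports "HOL-Algebra.Algebra"
begin

text \<open>Real-valued functions on a group G are represented as functions on the element
type that vanish outside the carrier (extensional), so that the function spaces
below can be compared as sets.\<close>

definition quasi_jensen :: "('g, 'b) monoid_scheme \<Rightarrow> ('g \<Rightarrow> real) \<Rightarrow> bool" where
  "quasi_jensen G f \<longleftrightarrow> (\<exists>c>0. \<forall>x\<in>carrier G. \<forall>y\<in>carrier G.
      \<bar>f (x \<otimes>\<^bsub>G\<^esub> y) + f (x \<otimes>\<^bsub>G\<^esub> inv\<^bsub>G\<^esub> y) - 2 * f x\<bar> \<le> c)"

definition pseudo_jensen :: "('g, 'b) monoid_scheme \<Rightarrow> ('g \<Rightarrow> real) \<Rightarrow> bool" where
  "pseudo_jensen G f \<longleftrightarrow> quasi_jensen G f \<and>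
      (\<forall>x\<in>carrier G. \<forall>n::int. f (x [^]\<^bsub>G\<^esub> n) = real_of_int n * f x)"

definition PJ :: "('g, 'b) monoid_scheme \<Rightarrow> ('g \<Rightarrow> real) set" where
  "PJ G = {f. f \<in> extensional (carrier G) \<and> pseudo_jensen G f}"

definition J0 :: "('g, 'b) monoid_scheme \<Rightarrow> ('g \<Rightarrow> real) set" where
  "J0 G = {f. f \<in> extensional (carrier G) \<and>
      (\<forall>x\<in>carrier G. \<forall>y\<in>carrier G.
         f (x \<otimes>\<^bsub>G\<^esub> y) + f (x \<otimes>\<^bsub>G\<^esub> inv\<^bsub>G\<^esub> y) = 2 * f x) \<and>
      f (one G) = 0}"

definition Hom_R :: "('g, 'b) monoid_scheme \<Rightarrow> ('g \<Rightarrow> real) set" where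
  "Hom_R G = {f. f \<in> extensional (carrier G) \<and>
      (\<forall>x\<in>carrier G. \<forall>y\<in>carrier G. f (x \<otimes>\<^bsub>G\<^esub> y) = f x + f y)}"

definition jensen_stable :: "('g, 'b) monoid_scheme \<Rightarrow> bool" where
  "jensen_stable G \<longleftrightarrow> (\<forall>f::'g \<Rightarrow> real.
     (\<exists>c>0. \<forall>x\<in>carrier G. \<forall>y\<in>carrier G.
        \<bar>f (x \<otimes>\<^bsub>G\<^esub> y) + f (x \<otimes>\<^bsub>G\<^esub> inv\<^bsub>G\<^esub> y) - 2 * f x\<bar> \<le> c) \<longrightarrow>
     (\<exists>j::'g \<Rightarrow> real.
        (\<forall>x\<in>carrier G. \<forall>y\<in>carrier G.
           j (x \<otimes>\<^bsub>G\<^esub> y) + j (x \<otimes>\<^bsub>G\<^esub> inv\<^bsub>G\<^esub> y) = 2 * j x) \<and>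
        (\<exists>B. \<forall>x\<in>carrier G. \<bar>j x - f x\<bar> \<le> B)))"

end

theory Submission
  imports Defs
begin

(* Left translation embeds A into the group of all permutations of a set, and there every
   permutation g is a product of two involutions: choosing a base point r in each orbit of g,
   the reflection s (g^k r) = g^(-k) r is an involution, and so is t = s g, while g = s t.
   If g = s t with s^2 = t^2 = 1, the quasi-Jensen inequality at (1, s) and at (s, t) gives
   |f g - f 1| <= c. So in such a group every quasi-Jensen function is bounded: the zero function
   approximates it, and pseudo-Jensen functions, solutions of Jensen's equation vanishing at 1
   and homomorphisms to the reals all vanish. *)

lemma int_action_orbit_representative:
  fixes P :: "int \<Rightarrow> 'a \<Rightarrow> 'a"
  assumes P_0: "\<And>y. P 0 y = y" and P_add: "\<And>i j y. P i (P j y) = P (i + j) y"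
  obtains r where "\<And>j y. r (P j y) = r y" and "\<And>y. \<exists>k. P k (r y) = y"
proof
  define r where "r y = (SOME z. z \<in> range (\<lambda>k. P k y))" for y
  have "range (\<lambda>k. P k (P j y)) = range (\<lambda>k. P k y)" for j y
  proof -
    have "P k y = P (k - j) (P j y)" for k by (simp add: P_add)
    then have "range (\<lambda>k. P k y) \<subseteq> range (\<lambda>k. P k (P j y))" by (metis rangeI image_subsetI)
    moreover have "range (\<lambda>k. P k (P j y)) \<subseteq> range (\<lambda>k. P k y)" by (auto simp: P_add)
    ultimately show ?thesis by blast
  qed
  then show "r (P j y) = r y" for j y by (simp add: r_def)
  show "\<exists>k. P k (r y) = y" for y
  proof -
    have "r y \<in> range (\<lambda>k. P k y)" unfolding r_def by (rule someI) (rule rangeI)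
    then obtain m where "r y = P m y" by blast
    then have "P (- m) (r y) = y" by (simp add: P_add P_0)
    then show ?thesis ..
  qed
qed

lemma int_action_generator_eq_comp_involutions:
  fixes P :: "int \<Rightarrow> 'a \<Rightarrow> 'a"
  assumes P_0: "\<And>y. P 0 y = y" and P_add: "\<And>i j y. P i (P j y) = P (i + j) y"
  obtains s t where "s \<circ> s = id" and "t \<circ> t = id" and "P 1 = s \<circ> t"
proof -
  obtain r where r_P: "\<And>j y. r (P j y) = r y" and r_gen: "\<And>y. \<exists>k. P k (r y) = y"
    using int_action_orbit_representative P_0 P_add by blast
  have r_r: "r (r y) = r y" for y
    using r_gen[of y] r_P by metis
  have neg_cong: "P (- k) y = P (- l) y" if "P k y = P l y" for k l y
  proof -
    have "P (- k) y = P (- k - l) (P l y)" by (simp add: P_add)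
    also have "\<dots> = P (- k - l) (P k y)" using that by simp
    also have "\<dots> = P (- l) y" by (simp add: P_add)
    finally show ?thesis .
  qed
  define s where "s y = P (- (SOME k. P k (r y) = y)) (r y)" for y
  have s_eval: "s y = P (- k) (r y)" if "P k (r y) = y" for k y
  proof -
    have "P (SOME k. P k (r y) = y) (r y) = P k (r y)"
      using someI_ex[OF r_gen[of y]] that by simp
    then show ?thesis unfolding s_def by (rule neg_cong)
  qed
  have s_s: "s (s y) = y" for y
  proof -
    obtain k where k: "P k (r y) = y" using r_gen by blast
    have r_s: "r (s y) = r y" by (simp add: s_eval[OF k] r_P r_r)
    have "P (- k) (r (s y)) = s y" unfolding r_s by (rule s_eval[OF k, symmetric])
    then have "s (s y) = P (- (- k)) (r (s y))" by (rule s_eval)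
    then show ?thesis using k r_s by simp
  qed
  define t where "t = s \<circ> P 1"
  have t_t: "t (t y) = y" for y
  proof -
    obtain k where k: "P k (r y) = y" using r_gen by blast
    have "P (1 + k) (r (P 1 y)) = P 1 y" by (simp add: r_P k flip: P_add)
    then have t_y: "t y = P (- 1 - k) (r y)" by (simp add: t_def s_eval r_P)
    have "P (- k) (r (P 1 (t y))) = P 1 (t y)" by (simp add: t_y r_P r_r P_add)
    then have "t (t y) = P k (r (t y))" by (simp add: t_def s_eval r_P)
    then show ?thesis by (simp add: t_y r_P r_r k)
  qed
  show ?thesis
  proof
    show "s \<circ> s = id" "t \<circ> t = id" by (simp_all add: fun_eq_iff s_s t_t)
    show "P 1 = s \<circ> t" by (simp add: fun_eq_iff t_def s_s)
  qed
qed

lemma carrier_BijGroup_UNIV [simp]: "carrier (BijGroup UNIV) = {f. bij f}"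
  by (simp add: BijGroup_def Bij_def)

lemma one_BijGroup_UNIV [simp]: "\<one>\<^bsub>BijGroup UNIV\<^esub> = id"
  by (simp add: BijGroup_def id_def restrict_def)

lemma mult_BijGroup_UNIV [simp]: "bij f \<Longrightarrow> bij g \<Longrightarrow> f \<otimes>\<^bsub>BijGroup UNIV\<^esub> g = f \<circ> g"
  by (simp add: BijGroup_def Bij_def compose_def comp_def restrict_def)

lemma bij_eq_comp_involutions:
  assumes "bij g"
  obtains s t where "s \<circ> s = id" and "t \<circ> t = id" and "g = s \<circ> t"
proof -
  interpret S: group "BijGroup (UNIV :: 'a set)" by (rule group_BijGroup)
  define P where "P k = g [^]\<^bsub>BijGroup UNIV\<^esub> (k :: int)" for k
  have P_bij: "bij (P k)" for k
    using S.int_pow_closed assms by (simp add: P_def)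
  have "P 0 y = y" for y by (simp add: P_def)
  moreover have "P i (P j y) = P (i + j) y" for i j y
    using assms P_bij by (simp add: P_def S.int_pow_mult)
  moreover have "P 1 = g" using assms by (simp add: P_def)
  ultimately show ?thesis
    using that int_action_generator_eq_comp_involutions by metis
qed

definition bireflectional :: "('g, 'b) monoid_scheme \<Rightarrow> bool" where
  "bireflectional G \<longleftrightarrow> (\<forall>g\<in>carrier G. \<exists>s\<in>carrier G. \<exists>t\<in>carrier G.
      s \<otimes>\<^bsub>G\<^esub> s = \<one>\<^bsub>G\<^esub> \<and> t \<otimes>\<^bsub>G\<^esub> t = \<one>\<^bsub>G\<^esub> \<and> g = s \<otimes>\<^bsub>G\<^esub> t)"

lemma bireflectional_BijGroup_UNIV: "bireflectional (BijGroup UNIV)"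
  unfolding bireflectional_def
proof
  fix g :: "'a \<Rightarrow> 'a"
  assume "g \<in> carrier (BijGroup UNIV)"
  then obtain s t where s: "s \<circ> s = id" and t: "t \<circ> t = id" and g: "g = s \<circ> t"
    using bij_eq_comp_involutions by auto
  have "bij s" "bij t"
    using s t by (simp_all add: involuntory_imp_bij fun_eq_iff)
  then show "\<exists>s\<in>carrier (BijGroup UNIV). \<exists>t\<in>carrier (BijGroup UNIV).
      s \<otimes>\<^bsub>BijGroup UNIV\<^esub> s = \<one>\<^bsub>BijGroup UNIV\<^esub> \<and>
      t \<otimes>\<^bsub>BijGroup UNIV\<^esub> t = \<one>\<^bsub>BijGroup UNIV\<^esub> \<and> g = s \<otimes>\<^bsub>BijGroup UNIV\<^esub> t"
    using s t g by auto
qed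

definition translation_perm :: "('a, 'b) monoid_scheme \<Rightarrow> 'a \<Rightarrow> 'a \<times> 'c \<Rightarrow> 'a \<times> 'c" where
  "translation_perm G a = (\<lambda>(x, n). if x \<in> carrier G then (a \<otimes>\<^bsub>G\<^esub> x, n) else (x, n))"

lemma restrict_zero_iff: "f = (\<lambda>x\<in>A. 0) \<longleftrightarrow> f \<in> extensional A \<and> (\<forall>x\<in>A. f x = 0)"
  by (auto intro: extensionalityI)

context group
begin

lemma translation_perm_mult:
  "a \<in> carrier G \<Longrightarrow> b \<in> carrier G \<Longrightarrow>
    translation_perm G a \<circ> translation_perm G b = translation_perm G (a \<otimes> b)"
  by (auto simp: translation_perm_def fun_eq_iff m_assoc)

lemma translation_perm_one: "translation_perm G \<one> = id"
  by (auto simp: translation_perm_def fun_eq_iff)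

lemma bij_translation_perm:
  assumes "a \<in> carrier G"
  shows "bij (translation_perm G a)"
proof (rule o_bij)
  show "translation_perm G a \<circ> translation_perm G (inv a) = id"
    using assms by (simp add: translation_perm_mult translation_perm_one)
  show "translation_perm G (inv a) \<circ> translation_perm G a = id"
    using assms by (simp add: translation_perm_mult translation_perm_one)
qed

lemma translation_perm_hom: "translation_perm G \<in> hom G (BijGroup UNIV)"
  by (rule homI) (simp_all add: bij_translation_perm translation_perm_mult)

lemma inj_on_translation_perm: "inj_on (translation_perm G) (carrier G)"
proof (rule inj_onI)
  fix a b
  assume "a \<in> carrier G" "b \<in> carrier G" and eq: "translation_perm G a = translation_perm G b"
  with fun_cong[OF eq, of "(\<one>, undefined)"] show "a = b"
    by (simp add: translation_perm_def)
qed

lemma bireflectional_jensen_defect_bound: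
  fixes f :: "'a \<Rightarrow> real"
  assumes "bireflectional G"
    and defect: "\<And>x y. x \<in> carrier G \<Longrightarrow> y \<in> carrier G \<Longrightarrow>
      \<bar>f (x \<otimes> y) + f (x \<otimes> inv y) - 2 * f x\<bar> \<le> c"
    and "g \<in> carrier G"
  shows "\<bar>f g - f \<one>\<bar> \<le> c"
proof -
  obtain s t where s: "s \<in> carrier G" and t: "t \<in> carrier G"
    and "s \<otimes> s = \<one>" "t \<otimes> t = \<one>" and g: "g = s \<otimes> t"
    using assms unfolding bireflectional_def by blast
  then have "inv s = s" "inv t = t" by (simp_all add: inv_equality)
  then have "\<bar>f s + f s - 2 * f \<one>\<bar> \<le> c" and "\<bar>f g + f g - 2 * f s\<bar> \<le> c"
    using defect[of \<one> s] defect[of s t] s t g by simp_all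
  then show ?thesis by linarith
qed

lemma Hom_R_subset_J0: "Hom_R G \<subseteq> J0 G"
proof
  fix f assume "f \<in> Hom_R G"
  then have ext: "f \<in> extensional (carrier G)"
    and add: "\<And>x y. x \<in> carrier G \<Longrightarrow> y \<in> carrier G \<Longrightarrow> f (x \<otimes> y) = f x + f y"
    by (auto simp: Hom_R_def)
  have one: "f \<one> = 0" using add[of \<one> \<one>] by simp
  have "f (inv y) = - f y" if "y \<in> carrier G" for y
    using add[of y "inv y"] that one by simp
  with ext one add show "f \<in> J0 G" by (simp add: J0_def)
qed

lemma bireflectional_J0:
  assumes "bireflectional G"
  shows "J0 G = {\<lambda>x\<in>carrier G. 0}"
proof (intro equalityI subsetI)
  fix f assume "f \<in> J0 G"
  then have "f \<in> extensional (carrier G)" and "f \<one> = 0"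
    and "\<And>x y. x \<in> carrier G \<Longrightarrow> y \<in> carrier G \<Longrightarrow> f (x \<otimes> y) + f (x \<otimes> inv y) = 2 * f x"
    by (auto simp: J0_def)
  with bireflectional_jensen_defect_bound[OF assms, of f 0] show "f \<in> {\<lambda>x\<in>carrier G. 0}"
    by (simp add: restrict_zero_iff)
qed (simp add: J0_def)

lemma bireflectional_Hom_R:
  assumes "bireflectional G"
  shows "Hom_R G = {\<lambda>x\<in>carrier G. 0}"
proof -
  have "(\<lambda>x\<in>carrier G. 0) \<in> Hom_R G" by (simp add: Hom_R_def)
  with Hom_R_subset_J0 show ?thesis by (auto simp: bireflectional_J0[OF assms])
qed

lemma bireflectional_PJ:
  assumes "bireflectional G"
  shows "PJ G = {\<lambda>x\<in>carrier G. 0}"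
proof (intro equalityI subsetI)
  fix f assume "f \<in> PJ G"
  then have ext: "f \<in> extensional (carrier G)" and "quasi_jensen G f"
    and hom: "\<And>x n. x \<in> carrier G \<Longrightarrow> f (x [^] (n::int)) = of_int n * f x"
    by (auto simp: PJ_def pseudo_jensen_def)
  then obtain c where defect: "\<And>x y. x \<in> carrier G \<Longrightarrow> y \<in> carrier G \<Longrightarrow>
      \<bar>f (x \<otimes> y) + f (x \<otimes> inv y) - 2 * f x\<bar> \<le> c"
    unfolding quasi_jensen_def by blast
  have one: "f \<one> = 0" using hom[of \<one> 0] by simp
  have "f x = 0" if x: "x \<in> carrier G" for x
  proof (rule ccontr)
    assume "f x \<noteq> 0"
    then obtain n :: nat where "c < real n * \<bar>f x\<bar>"
      using reals_Archimedean3[of "\<bar>f x\<bar>"] by auto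
    moreover have "\<bar>f (x [^] int n) - f \<one>\<bar> \<le> c"
      using bireflectional_jensen_defect_bound[OF assms defect] x by simp
    moreover have "\<bar>f (x [^] int n) - f \<one>\<bar> = real n * \<bar>f x\<bar>"
      using hom[OF x, of "int n"] one by (simp add: abs_mult)
    ultimately show False by linarith
  qed
  with ext show "f \<in> {\<lambda>x\<in>carrier G. 0}" by (simp add: restrict_zero_iff)
next
  fix f :: "'a \<Rightarrow> real"
  assume "f \<in> {\<lambda>x\<in>carrier G. 0}"
  then have "f = (\<lambda>x\<in>carrier G. 0)" by simp
  moreover have "quasi_jensen G (\<lambda>x\<in>carrier G. 0)"
    unfolding quasi_jensen_def by (intro exI[of _ 1]) simp
  ultimately show "f \<in> PJ G" by (simp add: PJ_def pseudo_jensen_def)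
qed

lemma bireflectional_jensen_stable:
  assumes "bireflectional G"
  shows "jensen_stable G"
  unfolding jensen_stable_def
proof (intro allI impI)
  fix f :: "'a \<Rightarrow> real"
  assume "\<exists>c>0. \<forall>x\<in>carrier G. \<forall>y\<in>carrier G. \<bar>f (x \<otimes> y) + f (x \<otimes> inv y) - 2 * f x\<bar> \<le> c"
  then obtain c where defect: "\<And>x y. x \<in> carrier G \<Longrightarrow> y \<in> carrier G \<Longrightarrow>
      \<bar>f (x \<otimes> y) + f (x \<otimes> inv y) - 2 * f x\<bar> \<le> c"
    by blast
  have bound: "\<bar>f x\<bar> \<le> c + \<bar>f \<one>\<bar>" if "x \<in> carrier G" for x
    using bireflectional_jensen_defect_bound[OF assms defect that] by linarith
  show "\<exists>j. (\<forall>x\<in>carrier G. \<forall>y\<in>carrier G. j (x \<otimes> y) + j (x \<otimes> inv y) = 2 * j x) \<and>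
      (\<exists>B. \<forall>x\<in>carrier G. \<bar>j x - f x\<bar> \<le> B)"
    by (intro exI[of _ "\<lambda>_. 0"] conjI exI[of _ "c + \<bar>f \<one>\<bar>"] ballI) (simp_all add: bound)
qed

end

theorem theorem4p1:
  fixes A :: "('a, 'b) monoid_scheme"
  assumes "group A"
  shows "\<exists>(G :: ('a \<times> nat \<Rightarrow> 'a \<times> nat) monoid) h.
           group G \<and> h \<in> hom A G \<and> inj_on h (carrier A) \<and>
           PJ G = J0 G \<and> J0 G = Hom_R G \<and> jensen_stable G"
proof (intro exI conjI)
  let ?G = "BijGroup (UNIV :: ('a \<times> nat) set)"
  show "group ?G" by (rule group_BijGroup)
  then interpret G: group ?G .
  show "translation_perm A \<in> hom A ?G" "inj_on (translation_perm A) (carrier A)"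
    using group.translation_perm_hom group.inj_on_translation_perm assms by blast+
  have "bireflectional ?G" by (rule bireflectional_BijGroup_UNIV)
  then show "PJ ?G = J0 ?G" "J0 ?G = Hom_R ?G" "jensen_stable ?G"
    by (simp_all add: G.bireflectional_PJ G.bireflectional_J0 G.bireflectional_Hom_R
        G.bireflectional_jensen_stable)
qed

end
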